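(* Let $n\geq 2$, $w=w_1\cdots w_n\in\mathfrak{S}_n$, $i\in\{1,\dots,n\}$ and $1\leq k\leq n-1$. Then $w_i$ is a $k$-peak of $w$ if and only if both of the following hold: (1) if there is $s>i$ with $w_s>w_i$, then there is $j$ with $i<j\leq s$ and $w_i-w_j\geq k$; (2) if there is $s<i$ with $w_s>w_i$, then there is $j$ with $s\leq j<i$ and $w_i-w_j\geq k$.
   Context: $\mathfrak{S}_n$ is the set of permutations $w=w_1\cdots w_n$ of $\{1,\dots,n\}$. A section of $w$ is a consecutive block $w_s\cdots w_t$ ($s\le t$). A section $w_s\cdots w_t$ is a $k$-up if $s<t$ and $w_t-w_s\geq k$, and a $k$-down if $s<t$ and $w_s-w_t\geq k$; a $k$-up/$k$-down "in" $w_a\cdots w_b$ means one $w_s\cdots w_t$ with $a\le s<t\le b$. A section $w_i\cdots w_j$ ($i<j$) is $k$-ascending if $w_i=\min\{w_i,\dots,w_j\}$, $w_j=\max\{w_i,\dots,w_j\}$, $w_j-w_i\geq k$, and there is no $k$-down in it; it is $k$-descending if $w_i=\max$, $w_j=\min$ of $\{w_i,\dots,w_j\}$, $w_i-w_j\geq k$, and there is no $k$-up in it. Such a section is maximal if not contained in another section of the same type. An entry $w_i$ is a $k$-peak of $w$ if it is the last entry of a maximal $k$-ascending section or the first entry of a maximal $k$-descending section. *)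

theory Defs
  imports Main
begin

(* Permutations of {1..n} in one-line notation: w :: nat => nat, entries w 1, ..., w n.
   Differences are taken in int. *)

definition is_perm :: "nat \<Rightarrow> (nat \<Rightarrow> nat) \<Rightarrow> bool" where
  "is_perm n w \<longleftrightarrow> bij_betw w {1..n} {1..n}"

definition has_kup_in :: "(nat \<Rightarrow> nat) \<Rightarrow> nat \<Rightarrow> nat \<Rightarrow> nat \<Rightarrow> bool" where
  "has_kup_in w k a b \<longleftrightarrow> (\<exists>s t. a \<le> s \<and> s < t \<and> t \<le> b \<and> int (w t) - int (w s) \<ge> int k)"

definition has_kdown_in :: "(nat \<Rightarrow> nat) \<Rightarrow> nat \<Rightarrow> nat \<Rightarrow> nat \<Rightarrow> bool" where
  "has_kdown_in w k a b \<longleftrightarrow> (\<exists>s t. a \<le> s \<and> s < t \<and> t \<le> b \<and> int (w s) - int (w t) \<ge> int k)"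

definition k_ascending :: "nat \<Rightarrow> (nat \<Rightarrow> nat) \<Rightarrow> nat \<Rightarrow> nat \<Rightarrow> nat \<Rightarrow> bool" where
  "k_ascending n w k i j \<longleftrightarrow> 1 \<le> i \<and> i < j \<and> j \<le> n \<and>
     w i = Min (w ` {i..j}) \<and> w j = Max (w ` {i..j}) \<and>
     int (w j) - int (w i) \<ge> int k \<and> \<not> has_kdown_in w k i j"

definition k_descending :: "nat \<Rightarrow> (nat \<Rightarrow> nat) \<Rightarrow> nat \<Rightarrow> nat \<Rightarrow> nat \<Rightarrow> bool" where
  "k_descending n w k i j \<longleftrightarrow> 1 \<le> i \<and> i < j \<and> j \<le> n \<and>
     w i = Max (w ` {i..j}) \<and> w j = Min (w ` {i..j}) \<and>
     int (w i) - int (w j) \<ge> int k \<and> \<not> has_kup_in w k i j"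

definition max_k_ascending :: "nat \<Rightarrow> (nat \<Rightarrow> nat) \<Rightarrow> nat \<Rightarrow> nat \<Rightarrow> nat \<Rightarrow> bool" where
  "max_k_ascending n w k i j \<longleftrightarrow> k_ascending n w k i j \<and>
     \<not> (\<exists>i' j'. k_ascending n w k i' j' \<and> i' \<le> i \<and> j \<le> j' \<and> (i', j') \<noteq> (i, j))"

definition max_k_descending :: "nat \<Rightarrow> (nat \<Rightarrow> nat) \<Rightarrow> nat \<Rightarrow> nat \<Rightarrow> nat \<Rightarrow> bool" where
  "max_k_descending n w k i j \<longleftrightarrow> k_descending n w k i j \<and>
     \<not> (\<exists>i' j'. k_descending n w k i' j' \<and> i' \<le> i \<and> j \<le> j' \<and> (i', j') \<noteq> (i, j))"

definition is_k_peak :: "nat \<Rightarrow> (nat \<Rightarrow> nat) \<Rightarrow> nat \<Rightarrow> nat \<Rightarrow> bool" where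
  "is_k_peak n w k i \<longleftrightarrow> (\<exists>s. max_k_ascending n w k s i) \<or> (\<exists>t. max_k_descending n w k i t)"

end

(*
  If w_i ends a maximal k-ascending section w_a ... w_i, then w_i is the maximum of that section,
  so (2) holds with j = a; and an entry above w_i to the right reached without an intermediate
  k-drop would let the section be extended, so (1) holds.  Conversely, (1) and (2) force an entry
  at least k below w_i (the entry n if it lies above w_i, otherwise the entry n - k).  If it lies
  to the left, the last such position starts a k-ascending section ending at w_i, and the one
  starting leftmost is maximal: by (1) any extension to the right would contain a k-down.
  The descending case follows by reading w backwards.
*)
theory Submission
  imports Defs
begin

definition k_drop_before_rise_right :: "nat \<Rightarrow> (nat \<Rightarrow> nat) \<Rightarrow> nat \<Rightarrow> nat \<Rightarrow> bool" where
  "k_drop_before_rise_right n w k i \<longleftrightarrow>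
     (\<forall>s. i < s \<and> s \<le> n \<and> w s > w i \<longrightarrow> (\<exists>j. i < j \<and> j \<le> s \<and> int (w i) - int (w j) \<ge> int k))"

definition k_drop_before_rise_left :: "(nat \<Rightarrow> nat) \<Rightarrow> nat \<Rightarrow> nat \<Rightarrow> bool" where
  "k_drop_before_rise_left w k i \<longleftrightarrow>
     (\<forall>s. 1 \<le> s \<and> s < i \<and> w s > w i \<longrightarrow> (\<exists>j. s \<le> j \<and> j < i \<and> int (w i) - int (w j) \<ge> int k))"

lemma k_ascending_iff:
  "k_ascending n w k i j \<longleftrightarrow> 1 \<le> i \<and> i < j \<and> j \<le> n \<and> (\<forall>x\<in>{i..j}. w i \<le> w x \<and> w x \<le> w j) \<and>
     int k \<le> int (w j) - int (w i) \<and> \<not> has_kdown_in w k i j"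
  unfolding k_ascending_def by (auto simp: eq_Min_iff eq_Max_iff)

lemma k_descending_iff:
  "k_descending n w k i j \<longleftrightarrow> 1 \<le> i \<and> i < j \<and> j \<le> n \<and> (\<forall>x\<in>{i..j}. w j \<le> w x \<and> w x \<le> w i) \<and>
     int k \<le> int (w i) - int (w j) \<and> \<not> has_kup_in w k i j"
  unfolding k_descending_def by (auto simp: eq_Min_iff eq_Max_iff)

lemma k_ascending_imp_drop_before_rise_left:
  assumes "k_ascending n w k a i"
  shows "k_drop_before_rise_left w k i"
  unfolding k_drop_before_rise_left_def
proof (intro allI impI)
  fix s assume s: "1 \<le> s \<and> s < i \<and> w s > w i"
  have "a < i" "\<forall>x\<in>{a..i}. w x \<le> w i" "int k \<le> int (w i) - int (w a)"
    using assms by (auto simp: k_ascending_iff)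
  moreover from this s have "s < a" by (meson atLeastAtMost_iff leD le_less_linear less_imp_le)
  ultimately show "\<exists>j. s \<le> j \<and> j < i \<and> int (w i) - int (w j) \<ge> int k"
    by (intro exI[of _ a]) auto
qed

lemma k_ascending_extend_right:
  assumes asc: "k_ascending n w k a i" and t: "i < t" "t \<le> n" "w i < w t"
    and between: "\<And>x. i < x \<Longrightarrow> x < t \<Longrightarrow> w x \<le> w i \<and> int (w i) - int (w x) < int k"
  shows "k_ascending n w k a t"
proof -
  have a: "1 \<le> a" "a < i" and bounds: "\<forall>x\<in>{a..i}. w a \<le> w x \<and> w x \<le> w i"
    and rise: "int k \<le> int (w i) - int (w a)" and no_down: "\<not> has_kdown_in w k a i"
    using asc by (auto simp: k_ascending_iff)
  have below_i: "w x \<le> w i" if "a \<le> x" "x < t" for x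
    using bounds between that by (cases "x \<le> i") auto
  have small_drop: "int (w i) - int (w x) < int k" if "i < x" "x \<le> t" for x
    using between that t(3) rise by (cases "x = t") auto
  have "\<not> has_kdown_in w k a t"
  proof
    assume "has_kdown_in w k a t"
    then obtain s u where su: "a \<le> s" "s < u" "u \<le> t" "int k \<le> int (w s) - int (w u)"
      unfolding has_kdown_in_def by auto
    show False
    proof (cases "u \<le> i")
      case True
      then show False using no_down su unfolding has_kdown_in_def by auto
    next
      case False
      then show False using below_i[of s] small_drop[of u] su by linarith
    qed
  qed
  moreover have "\<forall>x\<in>{a..t}. w a \<le> w x \<and> w x \<le> w t"
  proof
    fix x assume x: "x \<in> {a..t}"
    show "w a \<le> w x \<and> w x \<le> w t"
    proof (cases "x \<le> i")
      case True
      then show ?thesis using bounds[rule_format, of x] x t(3) by auto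
    next
      case False
      then show ?thesis using small_drop[of x] below_i[of x] x rise t(3) by (cases "x = t") auto
    qed
  qed
  ultimately show ?thesis using a t rise by (auto simp: k_ascending_iff)
qed

lemma max_k_ascending_imp_drop_before_rise_right:
  assumes "max_k_ascending n w k a i"
  shows "k_drop_before_rise_right n w k i"
  unfolding k_drop_before_rise_right_def
proof (intro allI impI)
  fix s assume s: "i < s \<and> s \<le> n \<and> w s > w i"
  have asc: "k_ascending n w k a i"
    and maximal: "\<not> (\<exists>a' t. k_ascending n w k a' t \<and> a' \<le> a \<and> i \<le> t \<and> (a', t) \<noteq> (a, i))"
    using assms unfolding max_k_ascending_def by auto
  show "\<exists>j. i < j \<and> j \<le> s \<and> int (w i) - int (w j) \<ge> int k"
  proof (rule ccontr)
    assume no_drop: "\<not> ?thesis"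
    define t where "t = (LEAST x. i < x \<and> x \<le> s \<and> w x > w i)"
    have t: "i < t" "t \<le> s" "w t > w i"
      using LeastI[of "\<lambda>x. i < x \<and> x \<le> s \<and> w x > w i" s] s unfolding t_def by auto
    have "w x \<le> w i" if "i < x" "x < t" for x
      using not_less_Least[of x "\<lambda>x. i < x \<and> x \<le> s \<and> w x > w i"] that t unfolding t_def by auto
    moreover have "int (w i) - int (w x) < int k" if "i < x" "x < t" for x
      using no_drop that t by (meson le_less_trans less_imp_le not_le)
    ultimately have "k_ascending n w k a t"
      using k_ascending_extend_right[OF asc] t s by auto
    moreover have "(a, t) \<noteq> (a, i)" using t by simp
    ultimately show False using maximal less_imp_le[OF t(1)] by blast
  qed
qed

lemma ex_k_ascending_ending_at:
  assumes left: "k_drop_before_rise_left w k i" and "1 \<le> k" "i \<le> n"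
    and x: "1 \<le> x" "x < i" "int k \<le> int (w i) - int (w x)"
  shows "\<exists>a. k_ascending n w k a i"
proof -
  define P where "P y \<longleftrightarrow> 1 \<le> y \<and> y < i \<and> int k \<le> int (w i) - int (w y)" for y
  define p where "p = (GREATEST y. P y)"
  have p: "P p"
    unfolding p_def by (rule GreatestI_nat[of _ x i]) (use x in \<open>auto simp: P_def\<close>)
  have small_drop: "int (w i) - int (w y) < int k" if "p < y" "y \<le> i" for y
  proof (cases "y = i")
    case False
    have "\<not> P y" using that(1) Greatest_le_nat[of P y i] unfolding p_def by (auto simp: P_def)
    then show ?thesis using p that False by (auto simp: P_def)
  qed (use \<open>1 \<le> k\<close> in auto)
  have below_i: "w y \<le> w i" if "p \<le> y" "y \<le> i" for y
  proof (rule ccontr)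
    assume rises: "\<not> w y \<le> w i"
    then have "y \<noteq> p" "y \<noteq> i" using p \<open>1 \<le> k\<close> by (auto simp: P_def)
    then have "1 \<le> y \<and> y < i \<and> w y > w i" using rises p that by (auto simp: P_def)
    then obtain j where "y \<le> j" "j < i" "int k \<le> int (w i) - int (w j)"
      using left unfolding k_drop_before_rise_left_def by blast
    then show False using small_drop[of j] that \<open>y \<noteq> p\<close> by auto
  qed
  have "\<not> has_kdown_in w k p i"
  proof
    assume "has_kdown_in w k p i"
    then obtain s t where "p \<le> s" "s < t" "t \<le> i" "int k \<le> int (w s) - int (w t)"
      unfolding has_kdown_in_def by auto
    with below_i[of s] small_drop[of t] show False by linarith
  qed
  moreover have "w p \<le> w y \<and> w y \<le> w i" if "y \<in> {p..i}" for y
    using below_i[of y] small_drop[of y] p that by (cases "y = p") (auto simp: P_def)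
  ultimately have "k_ascending n w k p i"
    using p \<open>i \<le> n\<close> by (auto simp: k_ascending_iff P_def)
  then show ?thesis ..
qed

lemma k_ascending_imp_ex_max_k_ascending:
  assumes inj: "inj_on w {1..n}" and right: "k_drop_before_rise_right n w k i"
    and asc: "k_ascending n w k a i"
  shows "\<exists>a. max_k_ascending n w k a i"
proof -
  define a0 where "a0 = (LEAST a. k_ascending n w k a i)"
  have a0: "k_ascending n w k a0 i"
    unfolding a0_def using asc by (rule LeastI)
  have "\<not> k_ascending n w k a' t" if "a' \<le> a0" "i \<le> t" "(a', t) \<noteq> (a0, i)" for a' t
  proof
    assume asc': "k_ascending n w k a' t"
    show False
    proof (cases "t = i")
      case True
      then show False using Least_le[of "\<lambda>a. k_ascending n w k a i" a'] asc' that
        unfolding a0_def by auto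
    next
      case False
      have "a0 < i" "i \<le> n" using a0 by (auto simp: k_ascending_iff)
      then have "w i \<le> w t" "1 \<le> a'" "t \<le> n" "\<not> has_kdown_in w k a' t"
        using asc' that by (auto simp: k_ascending_iff)
      moreover have "w i \<noteq> w t"
        using inj_onD[OF inj, of i t] False \<open>1 \<le> a'\<close> \<open>t \<le> n\<close> that \<open>a0 < i\<close> \<open>i \<le> n\<close> by auto
      ultimately have "i < t \<and> t \<le> n \<and> w t > w i" using that False by auto
      then obtain j where "i < j" "j \<le> t" "int k \<le> int (w i) - int (w j)"
        using right unfolding k_drop_before_rise_right_def by blast
      then have "has_kdown_in w k a' t"
        unfolding has_kdown_in_def using that \<open>a0 < i\<close> by (intro exI[of _ i] exI[of _ j]) auto
      with \<open>\<not> has_kdown_in w k a' t\<close> show False ..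
    qed
  qed
  with a0 have "max_k_ascending n w k a0 i"
    unfolding max_k_ascending_def by blast
  then show ?thesis ..
qed

definition reversal :: "nat \<Rightarrow> (nat \<Rightarrow> nat) \<Rightarrow> nat \<Rightarrow> nat" where
  "reversal n w x = w (Suc n - x)"

lemma ball_atLeastAtMost_reversal:
  assumes "j \<le> n"
  shows "(\<forall>y\<in>{Suc n - j..Suc n - i}. P (Suc n - y)) \<longleftrightarrow> (\<forall>x\<in>{i..j}. P x)"
proof
  assume P: "\<forall>y\<in>{Suc n - j..Suc n - i}. P (Suc n - y)"
  show "\<forall>x\<in>{i..j}. P x"
  proof
    fix x assume "x \<in> {i..j}"
    with assms have "Suc n - x \<in> {Suc n - j..Suc n - i}" "Suc n - (Suc n - x) = x" by auto
    with P show "P x" by metis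
  qed
next
  assume P: "\<forall>x\<in>{i..j}. P x"
  show "\<forall>y\<in>{Suc n - j..Suc n - i}. P (Suc n - y)"
  proof
    fix y assume "y \<in> {Suc n - j..Suc n - i}"
    with assms have "Suc n - y \<in> {i..j}" by auto
    with P show "P (Suc n - y)" by blast
  qed
qed

lemma has_kdown_in_reversal:
  assumes "j \<le> n"
  shows "has_kdown_in (reversal n w) k (Suc n - j) (Suc n - i) \<longleftrightarrow> has_kup_in w k i j"
proof
  assume "has_kdown_in (reversal n w) k (Suc n - j) (Suc n - i)"
  then obtain s t where "Suc n - j \<le> s" "s < t" "t \<le> Suc n - i"
      "int k \<le> int (w (Suc n - s)) - int (w (Suc n - t))"
    unfolding has_kdown_in_def reversal_def by auto
  with assms show "has_kup_in w k i j"
    unfolding has_kup_in_def by (intro exI[of _ "Suc n - t"] exI[of _ "Suc n - s"]) auto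
next
  assume "has_kup_in w k i j"
  then obtain s t where "i \<le> s" "s < t" "t \<le> j" "int k \<le> int (w t) - int (w s)"
    unfolding has_kup_in_def by auto
  with assms show "has_kdown_in (reversal n w) k (Suc n - j) (Suc n - i)"
    unfolding has_kdown_in_def reversal_def by (intro exI[of _ "Suc n - t"] exI[of _ "Suc n - s"]) auto
qed

lemma k_descending_iff_reversal:
  "k_descending n w k i j \<longleftrightarrow> k_ascending n (reversal n w) k (Suc n - j) (Suc n - i)"
proof (cases "1 \<le> i \<and> i < j \<and> j \<le> n")
  case True
  then have "(\<forall>y\<in>{Suc n - j..Suc n - i}. w j \<le> reversal n w y \<and> reversal n w y \<le> w i)
      \<longleftrightarrow> (\<forall>x\<in>{i..j}. w j \<le> w x \<and> w x \<le> w i)"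
    unfolding reversal_def by (intro ball_atLeastAtMost_reversal) simp
  moreover have "1 \<le> Suc n - j" "Suc n - j < Suc n - i" "Suc n - i \<le> n" using True by arith+
  ultimately show ?thesis
    using True by (simp add: k_ascending_iff k_descending_iff has_kdown_in_reversal reversal_def)
next
  case False
  then show ?thesis by (auto simp: k_ascending_iff k_descending_iff)
qed

lemma max_k_descending_iff_reversal:
  "max_k_descending n w k i j \<longleftrightarrow> max_k_ascending n (reversal n w) k (Suc n - j) (Suc n - i)"
proof (cases "k_descending n w k i j")
  case True
  then have ij: "1 \<le> i" "i < j" "j \<le> n" by (auto simp: k_descending_def)
  have "(\<exists>i' j'. k_descending n w k i' j' \<and> i' \<le> i \<and> j \<le> j' \<and> (i', j') \<noteq> (i, j)) \<longleftrightarrow>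
      (\<exists>i' j'. k_ascending n (reversal n w) k i' j' \<and> i' \<le> Suc n - j \<and> Suc n - i \<le> j' \<and>
        (i', j') \<noteq> (Suc n - j, Suc n - i))"
  proof
    assume "\<exists>i' j'. k_descending n w k i' j' \<and> i' \<le> i \<and> j \<le> j' \<and> (i', j') \<noteq> (i, j)"
    then obtain i' j' where "k_descending n w k i' j'" "i' \<le> i" "j \<le> j'" "(i', j') \<noteq> (i, j)"
      by blast
    moreover from this have "1 \<le> i'" "j' \<le> n" by (auto simp: k_descending_def)
    ultimately show "\<exists>i' j'. k_ascending n (reversal n w) k i' j' \<and> i' \<le> Suc n - j \<and> Suc n - i \<le> j' \<and>
        (i', j') \<noteq> (Suc n - j, Suc n - i)"
      using ij by (intro exI[of _ "Suc n - j'"] exI[of _ "Suc n - i'"]) (auto simp: k_descending_iff_reversal)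
  next
    assume "\<exists>i' j'. k_ascending n (reversal n w) k i' j' \<and> i' \<le> Suc n - j \<and> Suc n - i \<le> j' \<and>
        (i', j') \<noteq> (Suc n - j, Suc n - i)"
    then obtain i' j' where "k_ascending n (reversal n w) k i' j'" "i' \<le> Suc n - j" "Suc n - i \<le> j'"
        "(i', j') \<noteq> (Suc n - j, Suc n - i)"
      by blast
    moreover from this have "1 \<le> i'" "j' \<le> n" by (auto simp: k_ascending_def)
    ultimately show "\<exists>i' j'. k_descending n w k i' j' \<and> i' \<le> i \<and> j \<le> j' \<and> (i', j') \<noteq> (i, j)"
      using ij by (intro exI[of _ "Suc n - j'"] exI[of _ "Suc n - i'"]) (auto simp: k_descending_iff_reversal)
  qed
  with True show ?thesis
    by (simp add: max_k_descending_def max_k_ascending_def k_descending_iff_reversal)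
next
  case False
  then show ?thesis
    by (simp add: max_k_descending_def max_k_ascending_def k_descending_iff_reversal)
qed

lemma k_drop_before_rise_left_reversal:
  assumes "i \<le> n"
  shows "k_drop_before_rise_left (reversal n w) k (Suc n - i) \<longleftrightarrow> k_drop_before_rise_right n w k i"
proof
  assume left: "k_drop_before_rise_left (reversal n w) k (Suc n - i)"
  show "k_drop_before_rise_right n w k i"
    unfolding k_drop_before_rise_right_def
  proof (intro allI impI)
    fix s assume s: "i < s \<and> s \<le> n \<and> w s > w i"
    with assms have "1 \<le> Suc n - s \<and> Suc n - s < Suc n - i \<and>
        reversal n w (Suc n - s) > reversal n w (Suc n - i)"
      by (auto simp: reversal_def Suc_diff_le)
    then obtain j where "Suc n - s \<le> j" "j < Suc n - i" "int k \<le> int (w i) - int (w (Suc n - j))"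
      using left assms unfolding k_drop_before_rise_left_def by (auto simp: reversal_def)
    with s show "\<exists>j. i < j \<and> j \<le> s \<and> int (w i) - int (w j) \<ge> int k"
      by (intro exI[of _ "Suc n - j"]) auto
  qed
next
  assume right: "k_drop_before_rise_right n w k i"
  show "k_drop_before_rise_left (reversal n w) k (Suc n - i)"
    unfolding k_drop_before_rise_left_def
  proof (intro allI impI)
    fix s assume s: "1 \<le> s \<and> s < Suc n - i \<and> reversal n w s > reversal n w (Suc n - i)"
    with assms have "i < Suc n - s \<and> Suc n - s \<le> n \<and> w (Suc n - s) > w i"
      by (auto simp: reversal_def)
    then obtain j where "i < j" "j \<le> Suc n - s" "int k \<le> int (w i) - int (w j)"
      using right unfolding k_drop_before_rise_right_def by blast
    with s assms show "\<exists>j. s \<le> j \<and> j < Suc n - i \<and>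
        int (reversal n w (Suc n - i)) - int (reversal n w j) \<ge> int k"
      by (intro exI[of _ "Suc n - j"]) (auto simp: reversal_def)
  qed
qed

lemma k_drop_before_rise_right_reversal:
  assumes "1 \<le> i" "i \<le> n"
  shows "k_drop_before_rise_right n (reversal n w) k (Suc n - i) \<longleftrightarrow> k_drop_before_rise_left w k i"
proof
  assume right: "k_drop_before_rise_right n (reversal n w) k (Suc n - i)"
  show "k_drop_before_rise_left w k i"
    unfolding k_drop_before_rise_left_def
  proof (intro allI impI)
    fix s assume s: "1 \<le> s \<and> s < i \<and> w s > w i"
    with assms have "Suc n - i < Suc n - s \<and> Suc n - s \<le> n \<and>
        reversal n w (Suc n - s) > reversal n w (Suc n - i)"
      by (auto simp: reversal_def Suc_diff_le)
    then obtain j where "Suc n - i < j" "j \<le> Suc n - s" "int k \<le> int (w i) - int (w (Suc n - j))"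
      using right assms unfolding k_drop_before_rise_right_def by (auto simp: reversal_def)
    with s show "\<exists>j. s \<le> j \<and> j < i \<and> int (w i) - int (w j) \<ge> int k"
      by (intro exI[of _ "Suc n - j"]) auto
  qed
next
  assume left: "k_drop_before_rise_left w k i"
  show "k_drop_before_rise_right n (reversal n w) k (Suc n - i)"
    unfolding k_drop_before_rise_right_def
  proof (intro allI impI)
    fix s assume s: "Suc n - i < s \<and> s \<le> n \<and> reversal n w s > reversal n w (Suc n - i)"
    with assms have "1 \<le> Suc n - s \<and> Suc n - s < i \<and> w (Suc n - s) > w i"
      by (auto simp: reversal_def)
    then obtain j where "Suc n - s \<le> j" "j < i" "int k \<le> int (w i) - int (w j)"
      using left unfolding k_drop_before_rise_left_def by blast
    with s assms show "\<exists>j. Suc n - i < j \<and> j \<le> s \<and>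
        int (reversal n w (Suc n - i)) - int (reversal n w j) \<ge> int k"
      by (intro exI[of _ "Suc n - j"]) (auto simp: reversal_def)
  qed
qed

lemma inj_on_reversal:
  assumes "inj_on w {1..n}"
  shows "inj_on (reversal n w) {1..n}"
proof (rule inj_onI)
  fix x y assume "x \<in> {1..n}" "y \<in> {1..n}" "reversal n w x = reversal n w y"
  moreover have "Suc n - x \<in> {1..n}" "Suc n - y \<in> {1..n}"
    using \<open>x \<in> {1..n}\<close> \<open>y \<in> {1..n}\<close> by auto
  ultimately have "Suc n - x = Suc n - y"
    using inj_onD[OF assms] by (auto simp: reversal_def)
  with \<open>x \<in> {1..n}\<close> \<open>y \<in> {1..n}\<close> show "x = y" by auto
qed

lemma max_k_ascending_imp_drop_before_rise:
  assumes "max_k_ascending n w k a i"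
  shows "k_drop_before_rise_right n w k i \<and> k_drop_before_rise_left w k i"
  using assms max_k_ascending_imp_drop_before_rise_right k_ascending_imp_drop_before_rise_left
  unfolding max_k_ascending_def by blast

lemma ex_max_k_ascending_ending_at:
  assumes "inj_on w {1..n}" "k_drop_before_rise_right n w k i" "k_drop_before_rise_left w k i"
    and "1 \<le> k" "i \<le> n" "1 \<le> x" "x < i" "int k \<le> int (w i) - int (w x)"
  shows "\<exists>a. max_k_ascending n w k a i"
proof -
  obtain a where "k_ascending n w k a i"
    using ex_k_ascending_ending_at[OF assms(3-8)] by blast
  then show ?thesis
    using k_ascending_imp_ex_max_k_ascending[OF assms(1,2)] by blast
qed

lemma max_k_descending_imp_drop_before_rise:
  assumes "max_k_descending n w k i b"
  shows "k_drop_before_rise_right n w k i \<and> k_drop_before_rise_left w k i"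
proof -
  have "1 \<le> i" "i \<le> n"
    using assms by (auto simp: max_k_descending_def k_descending_def)
  have "max_k_ascending n (reversal n w) k (Suc n - b) (Suc n - i)"
    using assms by (simp add: max_k_descending_iff_reversal)
  then have "k_drop_before_rise_right n (reversal n w) k (Suc n - i) \<and>
      k_drop_before_rise_left (reversal n w) k (Suc n - i)"
    by (rule max_k_ascending_imp_drop_before_rise)
  with \<open>1 \<le> i\<close> \<open>i \<le> n\<close> show ?thesis
    by (simp add: k_drop_before_rise_left_reversal k_drop_before_rise_right_reversal)
qed

lemma ex_max_k_descending_starting_at:
  assumes inj: "inj_on w {1..n}"
    and "k_drop_before_rise_right n w k i" "k_drop_before_rise_left w k i" "1 \<le> k" "1 \<le> i" "i < x" "x \<le> n" "int k \<le> int (w i) - int (w x)"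
  shows "\<exists>b. max_k_descending n w k i b"
proof -
  have "1 \<le> Suc n - x" "Suc n - x < Suc n - i" "Suc n - i \<le> n"
    using assms by arith+
  moreover have "int k \<le> int (reversal n w (Suc n - i)) - int (reversal n w (Suc n - x))"
    using assms by (simp add: reversal_def Suc_diff_le)
  moreover have "k_drop_before_rise_right n (reversal n w) k (Suc n - i)"
    "k_drop_before_rise_left (reversal n w) k (Suc n - i)"
    using assms by (simp_all add: k_drop_before_rise_left_reversal k_drop_before_rise_right_reversal)
  ultimately obtain a where a: "max_k_ascending n (reversal n w) k a (Suc n - i)"
    using ex_max_k_ascending_ending_at[OF inj_on_reversal[OF inj]] \<open>1 \<le> k\<close> by blast
  then have "a \<le> n" by (simp add: max_k_ascending_def k_ascending_def)
  with a have "max_k_descending n w k i (Suc n - a)"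
    by (simp add: max_k_descending_iff_reversal Suc_diff_le)
  then show ?thesis ..
qed

lemma ex_k_drop_position:
  assumes perm: "is_perm n w" and "1 \<le> i" "i \<le> n" "1 \<le> k" "k \<le> n - 1"
    and right: "k_drop_before_rise_right n w k i" and left: "k_drop_before_rise_left w k i"
  shows "\<exists>x\<in>{1..n}. x \<noteq> i \<and> int k \<le> int (w i) - int (w x)"
proof -
  have image: "w ` {1..n} = {1..n}"
    using perm by (simp add: is_perm_def bij_betw_def)
  with assms have wi: "w i \<in> {1..n}" by auto
  show ?thesis
  proof (cases "w i = n")
    case True
    have "n - k \<in> w ` {1..n}"
      using image assms by auto
    then obtain x where x: "x \<in> {1..n}" "w x = n - k" by auto
    with True assms show ?thesis by (intro bexI[of _ x]) auto
  next
    case False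
    have "n \<in> w ` {1..n}"
      using image assms by auto
    then obtain y where y: "y \<in> {1..n}" "w y = n" by auto
    with wi False have "w y > w i" by auto
    then have "y < i \<or> i < y" by (cases y i rule: linorder_cases) auto
    then obtain j where "j \<in> {1..n}" "j \<noteq> i" "int k \<le> int (w i) - int (w j)"
    proof
      assume "y < i"
      with left y \<open>w y > w i\<close> obtain j where "y \<le> j" "j < i" and drop: "int k \<le> int (w i) - int (w j)"
        unfolding k_drop_before_rise_left_def by auto
      then have "j \<in> {1..n}" "j \<noteq> i" using y \<open>i \<le> n\<close> by auto
      with that drop show thesis by blast
    next
      assume "i < y"
      with right y \<open>w y > w i\<close> obtain j where "i < j" "j \<le> y" and drop: "int k \<le> int (w i) - int (w j)"
        unfolding k_drop_before_rise_right_def by auto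
      then have "j \<in> {1..n}" "j \<noteq> i" using y \<open>1 \<le> i\<close> by auto
      with that drop show thesis by blast
    qed
    then show ?thesis by blast
  qed
qed

theorem proposition3p1:
  fixes n k i :: nat and w :: "nat \<Rightarrow> nat"
  assumes "n \<ge> 2" and "is_perm n w" and "1 \<le> i" and "i \<le> n"
    and "1 \<le> k" and "k \<le> n - 1"
  shows "is_k_peak n w k i \<longleftrightarrow>
    ((\<forall>s. i < s \<and> s \<le> n \<and> w s > w i \<longrightarrow>
        (\<exists>j. i < j \<and> j \<le> s \<and> int (w i) - int (w j) \<ge> int k)) \<and>
     (\<forall>s. 1 \<le> s \<and> s < i \<and> w s > w i \<longrightarrow>
        (\<exists>j. s \<le> j \<and> j < i \<and> int (w i) - int (w j) \<ge> int k)))"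
proof -
  have inj: "inj_on w {1..n}"
    using \<open>is_perm n w\<close> unfolding is_perm_def by (rule bij_betw_imp_inj_on)
  have "is_k_peak n w k i \<longleftrightarrow> k_drop_before_rise_right n w k i \<and> k_drop_before_rise_left w k i"
  proof
    assume "is_k_peak n w k i"
    then show "k_drop_before_rise_right n w k i \<and> k_drop_before_rise_left w k i"
      unfolding is_k_peak_def
      using max_k_ascending_imp_drop_before_rise max_k_descending_imp_drop_before_rise by blast
  next
    assume drop_rise: "k_drop_before_rise_right n w k i \<and> k_drop_before_rise_left w k i"
    with assms obtain x where x: "x \<in> {1..n}" "x \<noteq> i" "int k \<le> int (w i) - int (w x)"
      using ex_k_drop_position by blast
    consider "x < i" | "i < x"
      using \<open>x \<noteq> i\<close> by linarith
    then show "is_k_peak n w k i"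
    proof cases
      case 1
      then show ?thesis
        using ex_max_k_ascending_ending_at[OF inj] drop_rise x assms unfolding is_k_peak_def by auto
    next
      case 2
      then show ?thesis
        using ex_max_k_descending_starting_at[OF inj] drop_rise x assms unfolding is_k_peak_def by auto
    qed
  qed
  then show ?thesis
    unfolding k_drop_before_rise_right_def k_drop_before_rise_left_def .
qed

end
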